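(* Let $n_\text{in}\ge1$, $n_\text{out}\in\{2,3\}$, $\mathbf{W}\in\mathbb{R}^{n_\text{out}\times n_\text{in}}$, $\mathbf{b}\in\mathbb{R}^{n_\text{out}}$, $\mathbf{c}\in\mathbb{R}^{n_\text{in}}$, $\mathbf{U}=[\mathbf{u}_1\,\ldots\,\mathbf{u}_{n_\text{in}}]\in\mathbb{R}^{n_\text{in}\times n_\text{in}}$. For $r\in[0,1]$ let $\mathcal{P}(\mathbf{U})=\{\mathbf{c}+\sum_j\lambda_j\mathbf{u}_j:\lambda\in[0,1]^{n_\text{in}}\}$, $\mathcal{P}(\mathbf{U}^L_r)=\{\mathbf{c}+\lambda_1 r\mathbf{u}_1+\sum_{j\ge2}\lambda_j\mathbf{u}_j:\lambda\in[0,1]^{n_\text{in}}\}$, $\mathcal{P}(\mathbf{U}^R_r)=\{\mathbf{c}+r\mathbf{u}_1+\lambda_1(1-r)\mathbf{u}_1+\sum_{j\ge2}\lambda_j\mathbf{u}_j:\lambda\in[0,1]^{n_\text{in}}\}$, let $\mathcal{P}(\mathbf{V}),\mathcal{P}(\mathbf{V}^L_r),\mathcal{P}(\mathbf{V}^R_r)$ be their images under $\mathbf{x}\mapsto\mathbf{W}\mathbf{x}+\mathbf{b}$, and define $V_\text{red}(r)=\mathrm{Vol}(\mathcal{B}(\mathbf{V}))-\mathrm{Vol}(\mathcal{B}(\mathbf{V}^L_r)\cup\mathcal{B}(\mathbf{V}^R_r))$. Then $r=\tfrac12$ maximizes $V_\text{red}(r)$ over $r\in[0,1]$.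
   Context: For a parallelotope $\mathcal{P}\subset\mathbb{R}^{n_\text{out}}$, $\mathcal{B}(\cdot)$ denotes the smallest axis-aligned hyperrectangle containing it (the Cartesian product over coordinates of the interval between the minimal and maximal coordinate of its vertices); $\mathrm{Vol}$ is $n_\text{out}$-dimensional Lebesgue volume. *)

theory Defs
  imports "HOL-Analysis.Analysis"
begin

definition par_full :: "real^'n \<Rightarrow> real^'n^'n \<Rightarrow> (real^'n) set" where
  "par_full c U = {c + (\<Sum>j\<in>UNIV. (l $ j) *\<^sub>R column j U) | l.
       \<forall>j. 0 \<le> l $ j \<and> l $ j \<le> 1}"

text \<open>Left piece P(U^L_r): column k (the split column u_1) scaled by r.\<close>
definition par_left :: "real^'n \<Rightarrow> real^'n^'n \<Rightarrow> 'n \<Rightarrow> real \<Rightarrow> (real^'n) set" where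
  "par_left c U k r = {c + (\<Sum>j\<in>UNIV. (if j = k then r * l $ j else l $ j) *\<^sub>R column j U) | l.
       \<forall>j. 0 \<le> l $ j \<and> l $ j \<le> 1}"

definition par_right :: "real^'n \<Rightarrow> real^'n^'n \<Rightarrow> 'n \<Rightarrow> real \<Rightarrow> (real^'n) set" where
  "par_right c U k r = {c + r *\<^sub>R column k U
       + (\<Sum>j\<in>UNIV. (if j = k then (1 - r) * l $ j else l $ j) *\<^sub>R column j U) | l.
       \<forall>j. 0 \<le> l $ j \<and> l $ j \<le> 1}"

definition aff_img :: "real^'n^'m \<Rightarrow> real^'m \<Rightarrow> (real^'n) set \<Rightarrow> (real^'m) set" where
  "aff_img W b S = (\<lambda>x. W *v x + b) ` S"

definition bbox :: "(real^'m) set \<Rightarrow> (real^'m) set" where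
  "bbox S = cbox (\<chi> i. INF y\<in>S. y $ i) (\<chi> i. SUP y\<in>S. y $ i)"

definition V_red :: "real^'n^'m \<Rightarrow> real^'m \<Rightarrow> real^'n \<Rightarrow> real^'n^'n \<Rightarrow> 'n \<Rightarrow> real \<Rightarrow> real" where
  "V_red W b c U k r =
     measure lebesgue (bbox (aff_img W b (par_full c U)))
     - measure lebesgue (bbox (aff_img W b (par_left c U k r)) \<union> bbox (aff_img W b (par_right c U k r)))"

end

theory Submission
  imports Defs
begin

(* The affine image of the parallelotope with edges u_j is the parallelotope with edges w_j = W u_j;
   its bounding box has side sum_j |w_j,i| in coordinate i. Splitting the edge w_k at ratio r gives boxes
   with sides S_i + r |d_i| and S_i + (1 - r) |d_i|, where d = w_k and S_i collects the other edges.
   Their intersection is exactly the box of the cross-section through the split point, with sides S_i,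
   so the union has volume f r + f (1 - r) - f 0 for f t = prod_i (S_i + t |d_i|). Writing
   S_i + t |d_i| = A_i +- x_i around t = 1/2 shows f r + f (1 - r) >= 2 f (1/2). *)

definition parallelotope :: "'a::real_vector \<Rightarrow> ('n::finite \<Rightarrow> 'a) \<Rightarrow> 'a set" where
  "parallelotope p v = (\<lambda>l::real^'n. p + (\<Sum>j\<in>UNIV. l$j *\<^sub>R v j)) ` cbox 0 1"

lemma par_full_eq_parallelotope: "par_full c U = parallelotope c (\<lambda>j. column j U)"
  by (auto simp: par_full_def parallelotope_def mem_box_cart)

lemma par_left_eq_parallelotope:
  fixes U :: "real^'n^'n"
  shows "par_left c U k r = parallelotope c ((\<lambda>j. column j U)(k := r *\<^sub>R column k U))"
proof -
  have "(if j = k then r * l$j else l$j) *\<^sub>R column j U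
      = l$j *\<^sub>R ((\<lambda>j. column j U)(k := r *\<^sub>R column k U)) j" for l :: "real^'n" and j
    by simp
  then show ?thesis
    by (auto simp: par_left_def parallelotope_def mem_box_cart)
qed

lemma par_right_eq_parallelotope:
  fixes U :: "real^'n^'n"
  shows "par_right c U k r
    = parallelotope (c + r *\<^sub>R column k U) ((\<lambda>j. column j U)(k := (1 - r) *\<^sub>R column k U))"
proof -
  have "(if j = k then (1 - r) * l$j else l$j) *\<^sub>R column j U
      = l$j *\<^sub>R ((\<lambda>j. column j U)(k := (1 - r) *\<^sub>R column k U)) j" for l :: "real^'n" and j
    by simp
  then show ?thesis
    by (auto simp: par_right_def parallelotope_def mem_box_cart)
qed

lemma affine_image_parallelotope:
  assumes "linear f"
  shows "(\<lambda>x. f x + b) ` parallelotope p v = parallelotope (f p + b) (\<lambda>j. f (v j))"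
  unfolding parallelotope_def image_image
  by (simp add: linear_add[OF assms] linear_sum[OF assms] linear_scale[OF assms] algebra_simps)

lemma aff_img_parallelotope:
  "aff_img W b (parallelotope p v) = parallelotope (W *v p + b) (\<lambda>j. W *v v j)"
  unfolding aff_img_def by (rule affine_image_parallelotope[OF matrix_vector_mul_linear])

lemma mult_unit_interval_bounds:
  fixes l x :: real
  assumes "0 \<le> l" "l \<le> 1"
  shows "min 0 x \<le> l * x" "l * x \<le> max 0 x"
  using assms by (cases "0 \<le> x"; simp add: mult_left_le_one_le mult_nonneg_nonpos mult_le_cancel_right1)+

lemma INF_cube_sum:
  fixes x :: "'n::finite \<Rightarrow> real"
  shows "(INF l\<in>cbox 0 (1::real^'n). a + (\<Sum>j\<in>UNIV. l$j * x j)) = a + (\<Sum>j\<in>UNIV. min 0 (x j))"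
proof (rule cInf_eq_minimum)
  let ?l = "(\<chi> j. if x j < 0 then 1 else 0) :: real^'n"
  have "a + (\<Sum>j\<in>UNIV. min 0 (x j)) = a + (\<Sum>j\<in>UNIV. ?l$j * x j)"
    by (intro arg_cong2[where f="(+)"] refl sum.cong) auto
  moreover have "?l \<in> cbox 0 1"
    by (simp add: mem_box_cart)
  ultimately show "a + (\<Sum>j\<in>UNIV. min 0 (x j)) \<in> (\<lambda>l. a + (\<Sum>j\<in>UNIV. l$j * x j)) ` cbox 0 1"
    by blast
next
  fix y assume "y \<in> (\<lambda>l. a + (\<Sum>j\<in>UNIV. l$j * x j)) ` cbox 0 (1::real^'n)"
  then show "a + (\<Sum>j\<in>UNIV. min 0 (x j)) \<le> y"
    by (auto simp: mem_box_cart intro!: sum_mono mult_unit_interval_bounds)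
qed

lemma SUP_cube_sum:
  fixes x :: "'n::finite \<Rightarrow> real"
  shows "(SUP l\<in>cbox 0 (1::real^'n). a + (\<Sum>j\<in>UNIV. l$j * x j)) = a + (\<Sum>j\<in>UNIV. max 0 (x j))"
proof (rule cSup_eq_maximum)
  let ?l = "(\<chi> j. if x j > 0 then 1 else 0) :: real^'n"
  have "a + (\<Sum>j\<in>UNIV. max 0 (x j)) = a + (\<Sum>j\<in>UNIV. ?l$j * x j)"
    by (intro arg_cong2[where f="(+)"] refl sum.cong) auto
  moreover have "?l \<in> cbox 0 1"
    by (simp add: mem_box_cart)
  ultimately show "a + (\<Sum>j\<in>UNIV. max 0 (x j)) \<in> (\<lambda>l. a + (\<Sum>j\<in>UNIV. l$j * x j)) ` cbox 0 1"
    by blast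
next
  fix y assume "y \<in> (\<lambda>l. a + (\<Sum>j\<in>UNIV. l$j * x j)) ` cbox 0 (1::real^'n)"
  then show "y \<le> a + (\<Sum>j\<in>UNIV. max 0 (x j))"
    by (auto simp: mem_box_cart intro!: sum_mono mult_unit_interval_bounds)
qed

lemma bbox_parallelotope:
  fixes p :: "real^'m" and v :: "'n::finite \<Rightarrow> real^'m"
  shows "bbox (parallelotope p v) =
    cbox (\<chi> i. p$i + (\<Sum>j\<in>UNIV. min 0 (v j $ i))) (\<chi> i. p$i + (\<Sum>j\<in>UNIV. max 0 (v j $ i)))"
proof -
  have component: "(p + (\<Sum>j\<in>UNIV. l$j *\<^sub>R v j)) $ i = p$i + (\<Sum>j\<in>UNIV. l$j * v j $ i)"
    for l :: "real^'n" and i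
    by simp
  show ?thesis
    unfolding bbox_def parallelotope_def image_image component INF_cube_sum SUP_cube_sum ..
qed

lemma measure_bbox_parallelotope:
  fixes p :: "real^'m" and v :: "'n::finite \<Rightarrow> real^'m"
  shows "measure lebesgue (bbox (parallelotope p v)) = (\<Prod>i\<in>UNIV. \<Sum>j\<in>UNIV. \<bar>v j $ i\<bar>)"
proof -
  have "(\<Sum>j\<in>UNIV. min 0 (v j $ i)) \<le> (\<Sum>j\<in>UNIV. max 0 (v j $ i))" for i
    by (intro sum_mono) auto
  then have "cbox (\<chi> i. p$i + (\<Sum>j\<in>UNIV. min 0 (v j $ i))) (\<chi> i. p$i + (\<Sum>j\<in>UNIV. max 0 (v j $ i))) \<noteq> {}"
    by (auto simp: interval_ne_empty_cart)
  moreover have "max 0 x - min 0 x = \<bar>x\<bar>" for x :: real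
    by auto
  ultimately show ?thesis
    by (simp add: bbox_parallelotope content_cbox_cart sum_subtractf[symmetric])
qed

lemma sum_fun_upd_UNIV:
  fixes g :: "'a \<Rightarrow> 'b::ab_group_add" and v :: "'n::finite \<Rightarrow> 'a"
  shows "(\<Sum>j\<in>UNIV. g ((v(k := x)) j)) = (\<Sum>j\<in>UNIV. g ((v(k := y)) j)) + g x - g y"
proof -
  have "(\<Sum>j\<in>UNIV. g ((v(k := z)) j)) = g z + (\<Sum>j\<in>UNIV - {k}. g (v j))" for z
    by (simp add: sum.remove[of UNIV k])
  then show ?thesis
    by simp
qed

lemma split_point_min_max:
  fixes r d :: real
  assumes "0 \<le> r" "r \<le> 1"
  shows "max (min 0 (r * d)) (r * d + min 0 ((1 - r) * d)) = r * d"
    and "min (max 0 (r * d)) (r * d + max 0 ((1 - r) * d)) = r * d"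
proof -
  consider "0 \<le> d" | "d \<le> 0" by linarith
  then have "(0 \<le> r * d \<and> 0 \<le> (1 - r) * d) \<or> (r * d \<le> 0 \<and> (1 - r) * d \<le> 0)"
    by cases (use assms in \<open>auto simp: mult_nonneg_nonpos\<close>)
  then show "max (min 0 (r * d)) (r * d + min 0 ((1 - r) * d)) = r * d"
    and "min (max 0 (r * d)) (r * d + max 0 ((1 - r) * d)) = r * d"
    by (auto simp: min_def max_def)
qed

lemma bbox_split_parallelotope_Int:
  fixes q :: "real^'m" and w :: "'n::finite \<Rightarrow> real^'m"
  assumes "0 \<le> r" "r \<le> 1"
  shows "bbox (parallelotope q (w(k := r *\<^sub>R w k)))
           \<inter> bbox (parallelotope (q + r *\<^sub>R w k) (w(k := (1 - r) *\<^sub>R w k)))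
         = bbox (parallelotope (q + r *\<^sub>R w k) (w(k := 0)))"
proof -
  have lower: "(\<Sum>j\<in>UNIV. min 0 ((w(k := t *\<^sub>R w k)) j $ i))
      = (\<Sum>j\<in>UNIV. min 0 ((w(k := 0)) j $ i)) + min 0 (t * w k $ i)" for t i
    using sum_fun_upd_UNIV[of "\<lambda>x. min 0 (x $ i)" w k "t *\<^sub>R w k" 0] by simp
  have upper: "(\<Sum>j\<in>UNIV. max 0 ((w(k := t *\<^sub>R w k)) j $ i))
      = (\<Sum>j\<in>UNIV. max 0 ((w(k := 0)) j $ i)) + max 0 (t * w k $ i)" for t i
    using sum_fun_upd_UNIV[of "\<lambda>x. max 0 (x $ i)" w k "t *\<^sub>R w k" 0] by simp
  have "max (q$i + (\<Sum>j\<in>UNIV. min 0 ((w(k := r *\<^sub>R w k)) j $ i)))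
            ((q + r *\<^sub>R w k)$i + (\<Sum>j\<in>UNIV. min 0 ((w(k := (1 - r) *\<^sub>R w k)) j $ i)))
        = (q + r *\<^sub>R w k)$i + (\<Sum>j\<in>UNIV. min 0 ((w(k := 0)) j $ i))" for i
    using split_point_min_max(1)[OF assms, of "w k $ i"] unfolding lower
    by (simp add: max_def split: if_splits)
  moreover have "min (q$i + (\<Sum>j\<in>UNIV. max 0 ((w(k := r *\<^sub>R w k)) j $ i)))
            ((q + r *\<^sub>R w k)$i + (\<Sum>j\<in>UNIV. max 0 ((w(k := (1 - r) *\<^sub>R w k)) j $ i)))
        = (q + r *\<^sub>R w k)$i + (\<Sum>j\<in>UNIV. max 0 ((w(k := 0)) j $ i))" for i
    using split_point_min_max(2)[OF assms, of "w k $ i"] unfolding upper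
    by (simp add: min_def split: if_splits)
  ultimately show ?thesis
    unfolding bbox_parallelotope Int_interval_cart interval_cbox_cart by simp
qed

lemma sum_abs_fun_upd_scaleR:
  fixes w :: "'n::finite \<Rightarrow> real^'m"
  shows "(\<Sum>j\<in>UNIV. \<bar>(w(k := t *\<^sub>R w k)) j $ i\<bar>)
    = (\<Sum>j\<in>UNIV. \<bar>(w(k := 0)) j $ i\<bar>) + \<bar>t\<bar> * \<bar>w k $ i\<bar>"
  using sum_fun_upd_UNIV[of "\<lambda>x. \<bar>x $ i\<bar>" w k "t *\<^sub>R w k" 0] by (simp add: abs_mult)

lemma V_red_eq:
  fixes W :: "real^'n^'m" and U :: "real^'n^'n" and k :: 'n
  assumes r: "0 \<le> r" "r \<le> 1"
  defines "w \<equiv> \<lambda>j. W *v column j U"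
  defines "S \<equiv> \<lambda>i. \<Sum>j\<in>UNIV. \<bar>(w(k := 0)) j $ i\<bar>"
  shows "V_red W b c U k r = (\<Prod>i\<in>UNIV. S i + \<bar>w k $ i\<bar>)
     - ((\<Prod>i\<in>UNIV. S i + r * \<bar>w k $ i\<bar>) + (\<Prod>i\<in>UNIV. S i + (1 - r) * \<bar>w k $ i\<bar>) - (\<Prod>i\<in>UNIV. S i))"
proof -
  define q where "q = W *v c + b"
  have image_upd:
    "(\<lambda>j. W *v ((\<lambda>j. column j U)(k := t *\<^sub>R column k U)) j) = w(k := t *\<^sub>R w k)" for t
    by (auto simp: w_def matrix_vector_mult_scaleR)
  \<comment> \<open>The unsplit edge is written as \<open>1 *\<^sub>R w k\<close> so that \<open>volume\<close> below covers all three boxes.\<close>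
  have full: "aff_img W b (par_full c U) = parallelotope q (w(k := 1 *\<^sub>R w k))"
    by (simp add: par_full_eq_parallelotope aff_img_parallelotope q_def flip: w_def)
  have left: "aff_img W b (par_left c U k r) = parallelotope q (w(k := r *\<^sub>R w k))"
    unfolding par_left_eq_parallelotope aff_img_parallelotope image_upd q_def ..
  have right:
    "aff_img W b (par_right c U k r) = parallelotope (q + r *\<^sub>R w k) (w(k := (1 - r) *\<^sub>R w k))"
  proof -
    have "W *v (c + r *\<^sub>R column k U) + b = q + r *\<^sub>R w k"
      by (simp add: q_def w_def algebra_simps)
    then show ?thesis
      unfolding par_right_eq_parallelotope aff_img_parallelotope image_upd by simp
  qed
  have volume: "measure lebesgue (bbox (parallelotope p (w(k := t *\<^sub>R w k))))
      = (\<Prod>i\<in>UNIV. S i + \<bar>t\<bar> * \<bar>w k $ i\<bar>)" for p t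
    unfolding measure_bbox_parallelotope sum_abs_fun_upd_scaleR S_def ..
  have "bbox (parallelotope p v) \<in> lmeasurable" for p and v :: "'n \<Rightarrow> real^'m"
    by (simp add: bbox_parallelotope)
  then show ?thesis
    unfolding V_red_def full left right
    using volume[of _ 0] volume[of _ 1] r
    by (simp add: measure_Un3 bbox_split_parallelotope_Int volume)
qed

lemma prod_add_prod_diff_ge:
  fixes A x :: "'i \<Rightarrow> 'a::linordered_idom"
  assumes "finite I" "\<And>i. i \<in> I \<Longrightarrow> 0 \<le> x i \<and> x i \<le> A i"
  shows "2 * (\<Prod>i\<in>I. A i) \<le> (\<Prod>i\<in>I. A i + x i) + (\<Prod>i\<in>I. A i - x i)"
  using assms
proof (induction I rule: finite_induct)
  case empty
  then show ?case by simp
next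
  case (insert j I)
  define P where "P = (\<Prod>i\<in>I. A i + x i)"
  define Q where "Q = (\<Prod>i\<in>I. A i - x i)"
  have IH: "2 * (\<Prod>i\<in>I. A i) \<le> P + Q"
    using insert unfolding P_def Q_def by blast
  have x: "0 \<le> x j" "x j \<le> A j"
    using insert by auto
  have "Q \<le> P"
    unfolding P_def Q_def using insert.prems by (intro prod_mono) force
  have "2 * (A j * (\<Prod>i\<in>I. A i)) \<le> A j * (P + Q)"
    using mult_left_mono[OF IH, of "A j"] x by (simp add: algebra_simps)
  also have "\<dots> \<le> A j * (P + Q) + x j * (P - Q)"
    using \<open>Q \<le> P\<close> x by simp
  also have "\<dots> = (A j + x j) * P + (A j - x j) * Q"
    by (simp add: algebra_simps)
  finally show ?case
    using insert.hyps by (simp add: P_def Q_def)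
qed

lemma prod_affine_midpoint_le:
  fixes S e :: "'i \<Rightarrow> 'a::linordered_field"
  assumes "finite I" "\<And>i. i \<in> I \<Longrightarrow> 0 \<le> S i \<and> 0 \<le> e i" "0 \<le> r" "r \<le> 1"
  shows "2 * (\<Prod>i\<in>I. S i + e i / 2) \<le> (\<Prod>i\<in>I. S i + r * e i) + (\<Prod>i\<in>I. S i + (1 - r) * e i)"
proof -
  have half: "2 * (\<Prod>i\<in>I. S i + e i / 2) \<le> (\<Prod>i\<in>I. S i + t * e i) + (\<Prod>i\<in>I. S i + (1 - t) * e i)"
    if "1/2 \<le> t" "t \<le> 1" for t
  proof -
    have "0 \<le> (t - 1/2) * e i \<and> (t - 1/2) * e i \<le> S i + e i / 2" if "i \<in> I" for i
      using assms(2)[OF that] \<open>1/2 \<le> t\<close> \<open>t \<le> 1\<close> mult_right_mono[of "t - 1/2" "1/2" "e i"]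
      by auto
    from prod_add_prod_diff_ge[OF assms(1) this] show ?thesis
      by (simp add: algebra_simps)
  qed
  show ?thesis
  proof (cases "1/2 \<le> r")
    case True
    then show ?thesis using half assms by blast
  next
    case False
    then show ?thesis using half[of "1 - r"] assms by (simp add: add.commute)
  qed
qed

theorem corollary2:
  fixes W :: "real^'n^'m" and b :: "real^'m" and c :: "real^'n"
    and U :: "real^'n^'n" and k :: 'n
  assumes "CARD('m) = 2 \<or> CARD('m) = 3"
  shows "\<forall>r\<in>{0..1}. V_red W b c U k r \<le> V_red W b c U k (1/2)"
proof
  fix r :: real
  assume "r \<in> {0..1}"
  then have r: "0 \<le> r" "r \<le> 1"
    by auto
  define w where "w = (\<lambda>j. W *v column j U)"
  define S where "S = (\<lambda>i. \<Sum>j\<in>UNIV. \<bar>(w(k := 0)) j $ i\<bar>)"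
  have key: "2 * (\<Prod>i\<in>UNIV. S i + \<bar>w k $ i\<bar> / 2)
      \<le> (\<Prod>i\<in>UNIV. S i + r * \<bar>w k $ i\<bar>) + (\<Prod>i\<in>UNIV. S i + (1 - r) * \<bar>w k $ i\<bar>)"
    using prod_affine_midpoint_le[of UNIV S "\<lambda>i. \<bar>w k $ i\<bar>" r] r
    by (simp add: S_def sum_nonneg)
  have half: "0 \<le> (1/2::real)" "(1/2::real) \<le> 1"
    by simp_all
  show "V_red W b c U k r \<le> V_red W b c U k (1/2)"
    using key unfolding V_red_eq[OF r] V_red_eq[OF half] S_def w_def by simp
qed

end
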